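(* Consider a group of $p'$ PEs where PE $i$ holds a sorted string array $S_i'$ and let $V_i$ be the sample strings drawn by PE $i$ under character-based regular sampling with sampling distance $\omega'$. For $i\in\{0,\dots,p'-1\}$ let $S_i''=\{s\in S_i': a\le s\le b\}$ be an arbitrary contiguous subsequence of $S_i'$. If $|S_i''\cap V_i|=k$ for a nonnegative integer $k$, then $\|S_i''\|\le(k+1)(\omega'+\hat{\ell})$.
   Context: $\hat{\ell}$ is the length of the longest string and $\|X\|$ the number of characters of a set of strings $X$. Character-based regular sampling: with $\omega'=\|S'\|/(p'(v+1))$ for the concatenation $S'$ of the group's arrays and a sampling factor $v$, PE $i$ draws $\lceil\|S_i'\|/\omega'\rceil-1$ equally spaced positions in its character array (the concatenation of the characters of its strings in sorted order), so that fewer than $\omega'$ characters lie between consecutive sampled positions; each sampled position is shifted by at most $\hat{\ell}-1$ towards the beginning of the string containing it, and the strings thus reached form $V_i$. *)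

theory Defs
  imports Complex_Main "HOL-Library.List_Lexorder"
begin

text \<open>Strings are lists over a linearly ordered alphabet; strings are compared
lexicographically (instance from List_Lexorder). A PE's string array is a list of strings.\<close>

definition charlen :: "'a list list \<Rightarrow> nat" where
  "charlen xs = sum_list (map length xs)"

definition str_start :: "'a list list \<Rightarrow> nat \<Rightarrow> nat" where
  "str_start xs j = charlen (take j xs)"

definition omega :: "nat \<Rightarrow> (nat \<Rightarrow> 'a list list) \<Rightarrow> nat \<Rightarrow> real" where
  "omega p' S v = real (\<Sum>j<p'. charlen (S j)) / (real p' * (real v + 1))"

definition num_samples :: "'a list list \<Rightarrow> real \<Rightarrow> nat" where
  "num_samples xs w = nat \<lceil>real (charlen xs) / w\<rceil> - 1"

definition sample_positions :: "'a list list \<Rightarrow> real \<Rightarrow> nat set" where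
  "sample_positions xs w =
     (\<lambda>j. nat \<lfloor>real j * real (charlen xs) / real (num_samples xs w + 1)\<rfloor>) `
       {1..num_samples xs w}"

text \<open>Sample strings V_i, given as the set of indices (occurrences) of the strings
  containing a sampled position (shifting a position to the beginning of its string).\<close>
definition sample_idx :: "'a list list \<Rightarrow> real \<Rightarrow> nat set" where
  "sample_idx xs w = {j. j < length xs \<and>
     (\<exists>q\<in>sample_positions xs w. str_start xs j \<le> q \<and> q < str_start xs (Suc j))}"

definition max_len :: "nat \<Rightarrow> (nat \<Rightarrow> 'a list list) \<Rightarrow> nat" where
  "max_len p' S = Max ({0} \<union> (\<Union>j<p'. length ` set (S j)))"

end

theory Submission
  imports Defs
begin

text \<open>Let \<open>N\<close> be the number of characters of \<open>S\<^sub>i'\<close> and \<open>m\<close> the number of its samples.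
  The sampled positions \<open>\<lfloor>j N / (m+1)\<rfloor>\<close> cut the character array into pieces of at most
  \<open>N / (m+1) \<le> \<omega>'\<close> characters, so a run of consecutive strings none of which is hit
  by a sampled position has at most \<open>\<omega>'\<close> characters. Since \<open>S\<^sub>i'\<close> is sorted, \<open>S\<^sub>i''\<close> is a
  run of consecutive strings; its \<open>k\<close> sample strings split it into at most \<open>k+1\<close>
  sample-free runs, and each sample string has at most \<open>\<ell>\<close> characters. Hence
  \<open>\<parallel>S\<^sub>i''\<parallel> \<le> k \<ell> + (k+1) \<omega>'\<close>.\<close>

lemma interval_avoiding_floor_multiples_le:
  fixes c :: real and m x y :: nat
  assumes "0 \<le> c" and "x < y" and "real y \<le> real (m + 1) * c"
    and avoid: "\<And>j. 1 \<le> j \<Longrightarrow> j \<le> m \<Longrightarrow> \<not> (x \<le> nat \<lfloor>real j * c\<rfloor> \<and> nat \<lfloor>real j * c\<rfloor> < y)"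
  shows "real (y - x) \<le> c"
proof -
  have "c > 0"
    using assms(1-3) by (cases "c = 0") auto
  \<comment> \<open>the least \<open>j\<close> with \<open>x < j c\<close>\<close>
  define j where "j = nat \<lfloor>real x / c\<rfloor> + 1"
  have j_floor: "real j = real_of_int \<lfloor>real x / c\<rfloor> + 1"
    using \<open>c > 0\<close> by (simp add: j_def)
  have lower: "(real j - 1) * c \<le> real x"
    using \<open>c > 0\<close> by (simp add: j_floor flip: pos_le_divide_eq)
  have "real x < real j * c"
    using \<open>c > 0\<close> by (simp add: j_floor flip: pos_divide_less_eq)
  have "real y \<le> real j * c"
  proof (cases "j \<le> m")
    case True
    have "x \<le> nat \<lfloor>real j * c\<rfloor>"
      using \<open>real x < real j * c\<close> by (simp add: le_nat_floor)
    with avoid[of j] True have "y \<le> nat \<lfloor>real j * c\<rfloor>"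
      by (simp add: j_def)
    then have "real y \<le> real (nat \<lfloor>real j * c\<rfloor>)"
      by simp
    also have "\<dots> \<le> real j * c"
      using \<open>c > 0\<close> by (intro of_nat_floor) simp
    finally show ?thesis .
  next
    case False
    then have "real (m + 1) * c \<le> real j * c"
      using \<open>c > 0\<close> by (intro mult_right_mono) auto
    then show ?thesis
      using assms(3) by linarith
  qed
  with lower \<open>x < y\<close> show ?thesis
    by (simp add: of_nat_diff algebra_simps)
qed

lemma mono_step_containing:
  fixes F :: "nat \<Rightarrow> nat"
  assumes "mono F" and "F l \<le> q" and "q < F r"
  shows "\<exists>t. l \<le> t \<and> t < r \<and> F t \<le> q \<and> q < F (Suc t)"
  using assms(3)
proof (induction r)
  case 0
  then show ?case
    using assms(1,2) by (metis le_0_eq leD monoD nat_le_linear order_trans)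
next
  case (Suc r)
  show ?case
  proof (cases "F r \<le> q")
    case True
    have "l \<le> r"
    proof (rule ccontr)
      assume "\<not> l \<le> r"
      then have "F (Suc r) \<le> F l"
        using assms(1) by (simp add: monoD)
      then show False
        using assms(2) Suc.prems by simp
    qed
    then show ?thesis
      using True Suc.prems by auto
  next
    case False
    then show ?thesis
      using Suc by (meson less_Suc_eq not_le)
  qed
qed

lemma sum_le_by_marked_count:
  fixes f :: "nat \<Rightarrow> nat" and M :: "nat set" and c L :: real
  assumes unmarked: "\<And>l r. l \<le> r \<Longrightarrow> r \<le> n \<Longrightarrow> M \<inter> {l..<r} = {} \<Longrightarrow> real (sum f {l..<r}) \<le> c"
    and marked: "\<And>j. j < n \<Longrightarrow> real (f j) \<le> L"
    and "card (M \<inter> {l..<r}) = k" and "l \<le> r" and "r \<le> n"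
  shows "real (sum f {l..<r}) \<le> real k * L + (real k + 1) * c"
  using assms(3-5)
proof (induction k arbitrary: l)
  case 0
  then show ?case
    using unmarked by simp
next
  case (Suc k)
  define A where "A = M \<inter> {l..<r}"
  have "finite A" and "A \<noteq> {}"
    using Suc.prems(1) by (auto simp: A_def)
  define j where "j = Min A"
  have "j \<in> A" and j_min: "\<And>t. t \<in> A \<Longrightarrow> j \<le> t"
    using \<open>finite A\<close> \<open>A \<noteq> {}\<close> by (simp_all add: j_def)
  then have "l \<le> j" "j < r"
    by (auto simp: A_def)
  have "M \<inter> {l..<j} = {}"
    using j_min \<open>j < r\<close> by (force simp: A_def)
  then have head: "real (sum f {l..<j}) \<le> c"
    using unmarked \<open>l \<le> j\<close> \<open>j < r\<close> Suc.prems by simp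
  have "M \<inter> {Suc j..<r} = A - {j}"
    using j_min \<open>l \<le> j\<close> by (force simp: A_def)
  then have "card (M \<inter> {Suc j..<r}) = k"
    using Suc.prems(1) \<open>j \<in> A\<close> \<open>finite A\<close> by (simp add: A_def)
  then have tail: "real (sum f {Suc j..<r}) \<le> real k * L + (real k + 1) * c"
    using Suc.IH \<open>j < r\<close> Suc.prems by simp
  have "real (f j) \<le> L"
    using marked \<open>j < r\<close> Suc.prems by simp
  moreover have "sum f {l..<r} = sum f {l..<j} + (f j + sum f {Suc j..<r})"
    using \<open>l \<le> j\<close> \<open>j < r\<close>
    by (metis sum.atLeastLessThan_concat sum.atLeast_Suc_lessThan less_imp_le)
  ultimately show ?case
    using head tail by (simp add: algebra_simps)
qed

lemma str_start_Suc:
  "str_start xs (Suc j) = str_start xs j + (if j < length xs then length (xs ! j) else 0)"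
  by (simp add: str_start_def charlen_def take_Suc_conv_app_nth)

lemma mono_str_start: "mono (str_start xs)"
  by (simp add: mono_iff_le_Suc str_start_Suc)

lemma str_start_eq_sum:
  "j \<le> length xs \<Longrightarrow> str_start xs j = (\<Sum>t<j. length (xs ! t))"
proof (induction j)
  case 0
  then show ?case
    by (simp add: str_start_def charlen_def)
next
  case (Suc j)
  then show ?case
    by (simp add: str_start_Suc)
qed

lemma str_start_length: "str_start xs (length xs) = charlen xs"
  by (simp add: str_start_def)

lemma sum_lengths_eq_str_start_diff:
  assumes "l \<le> r" and "r \<le> length xs"
  shows "(\<Sum>t\<in>{l..<r}. length (xs ! t)) = str_start xs r - str_start xs l"
  using assms sum.atLeastLessThan_concat[of 0 l r "\<lambda>t. length (xs ! t)"]
  by (simp add: str_start_eq_sum atLeast0LessThan)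

lemma sample_free_run_charlen_le:
  assumes "l \<le> r" and "r \<le> length xs" and "sample_idx xs w \<inter> {l..<r} = {}"
  shows "real (\<Sum>t\<in>{l..<r}. length (xs ! t)) \<le> real (charlen xs) / real (num_samples xs w + 1)"
    (is "_ \<le> ?c")
proof (cases "str_start xs l < str_start xs r")
  case False
  then show ?thesis
    using assms(1,2) by (simp add: sum_lengths_eq_str_start_diff)
next
  case True
  let ?m = "num_samples xs w"
  have avoid: "\<not> (str_start xs l \<le> q \<and> q < str_start xs r)" if "q \<in> sample_positions xs w" for q
  proof
    assume "str_start xs l \<le> q \<and> q < str_start xs r"
    then obtain t where "l \<le> t" "t < r" "str_start xs t \<le> q" "q < str_start xs (Suc t)"
      using mono_step_containing[OF mono_str_start] by blast
    then have "t \<in> sample_idx xs w \<inter> {l..<r}"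
      using that assms(2) by (auto simp: sample_idx_def)
    then show False
      using assms(3) by simp
  qed
  have "str_start xs r \<le> charlen xs"
    using mono_str_start assms(2) by (metis monoD str_start_length)
  moreover have "real (?m + 1) * ?c = real (charlen xs)"
    by simp
  ultimately have r_le: "real (str_start xs r) \<le> real (?m + 1) * ?c"
    by linarith
  have "real (str_start xs r - str_start xs l) \<le> ?c"
  proof (rule interval_avoiding_floor_multiples_le)
    show "\<not> (str_start xs l \<le> nat \<lfloor>real j * ?c\<rfloor> \<and> nat \<lfloor>real j * ?c\<rfloor> < str_start xs r)"
      if "1 \<le> j" "j \<le> ?m" for j
      using that avoid by (force simp: sample_positions_def)
  qed (use True r_le in auto)
  then show ?thesis
    using assms(1,2) by (simp add: sum_lengths_eq_str_start_diff)
qed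

lemma charlen_div_samples_le:
  assumes "0 < w"
  shows "real (charlen xs) / real (num_samples xs w + 1) \<le> w"
proof -
  have "real (charlen xs) / w \<le> real_of_int \<lceil>real (charlen xs) / w\<rceil>"
    by simp
  also have "\<dots> \<le> real (num_samples xs w + 1)"
    by (simp add: num_samples_def)
  finally show ?thesis
    using assms by (simp add: divide_le_eq pos_divide_le_eq mult.commute)
qed

lemma sample_spacing_le_omega:
  assumes "i < p'"
  shows "real (charlen (S i)) / real (num_samples (S i) (omega p' S v) + 1) \<le> omega p' S v"
proof (cases "charlen (S i) = 0")
  case True
  then show ?thesis
    by (simp add: omega_def sum_nonneg)
next
  case False
  have "charlen (S i) \<le> (\<Sum>j<p'. charlen (S j))"
    using assms by (intro member_le_sum) auto
  then have "0 < omega p' S v"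
    using False assms unfolding omega_def by (intro divide_pos_pos) (simp_all del: of_nat_sum)
  then show ?thesis
    by (rule charlen_div_samples_le)
qed

lemma length_le_max_len:
  assumes "i < p'" and "s \<in> set (S i)"
  shows "length s \<le> max_len p' S"
  unfolding max_len_def using assms by (intro Max_ge) auto

lemma charlen_filter:
  "charlen (filter P xs) = (\<Sum>t\<in>{t. t < length xs \<and> P (xs ! t)}. length (xs ! t))"
proof -
  have "charlen (filter P xs) = (\<Sum>t<length xs. if P (xs ! t) then length (xs ! t) else 0)"
    unfolding charlen_def sum_list_map_filter' by (simp add: sum_list_sum_nth lessThan_atLeast0)
  also have "\<dots> = (\<Sum>t\<in>{..<length xs} \<inter> {t. P (xs ! t)}. length (xs ! t))"
    by (simp add: sum.inter_restrict)
  finally show ?thesis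
    by (simp add: Int_def conj_commute)
qed

lemma sorted_range_indices_atLeastLessThan:
  fixes xs :: "'a::linorder list"
  assumes "sorted xs"
  obtains l r where "l \<le> r" "r \<le> length xs" "{j. j < length xs \<and> a \<le> xs ! j \<and> xs ! j \<le> b} = {l..<r}"
proof (cases "{j. j < length xs \<and> a \<le> xs ! j \<and> xs ! j \<le> b} = {}")
  case True
  then show ?thesis
    using that[of 0 0] by simp
next
  case False
  define I where "I = {j. j < length xs \<and> a \<le> xs ! j \<and> xs ! j \<le> b}"
  have "finite I" and "I \<noteq> {}"
    using False by (simp_all add: I_def)
  then have "Min I \<in> I" "Max I \<in> I"
    by simp_all
  have "I = {Min I..<Suc (Max I)}"
  proof
    show "I \<subseteq> {Min I..<Suc (Max I)}"
      using \<open>finite I\<close> by (auto simp: less_Suc_eq_le)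
    show "{Min I..<Suc (Max I)} \<subseteq> I"
    proof
      fix j assume j: "j \<in> {Min I..<Suc (Max I)}"
      then have "j < length xs"
        using \<open>Max I \<in> I\<close> by (auto simp: I_def)
      moreover have "xs ! Min I \<le> xs ! j" and "xs ! j \<le> xs ! Max I"
        using assms j \<open>Max I \<in> I\<close> \<open>j < length xs\<close> by (auto simp: I_def sorted_nth_mono)
      ultimately show "j \<in> I"
        using \<open>Min I \<in> I\<close> \<open>Max I \<in> I\<close> by (auto simp: I_def)
    qed
  qed
  moreover have "Suc (Max I) \<le> length xs"
    using \<open>Max I \<in> I\<close> by (simp add: I_def)
  moreover have "Min I \<le> Suc (Max I)"
    using \<open>finite I\<close> \<open>Max I \<in> I\<close> by (simp add: Min_le le_SucI)
  ultimately show ?thesis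
    using that by (simp add: I_def)
qed

theorem lemma17:
  fixes p' v i k :: nat and S :: "nat \<Rightarrow> 'a::linorder list list" and a b :: "'a list"
  assumes "i < p'"
    and "\<And>j. j < p' \<Longrightarrow> sorted (S j)"
    and "card ({j. j < length (S i) \<and> a \<le> S i ! j \<and> S i ! j \<le> b}
               \<inter> sample_idx (S i) (omega p' S v)) = k"
  shows "real (charlen (filter (\<lambda>s. a \<le> s \<and> s \<le> b) (S i)))
           \<le> (real k + 1) * (omega p' S v + real (max_len p' S))"
proof -
  let ?w = "omega p' S v" and ?L = "max_len p' S"
  let ?c = "real (charlen (S i)) / real (num_samples (S i) ?w + 1)"
  obtain l r where lr: "l \<le> r" "r \<le> length (S i)"
    and range: "{j. j < length (S i) \<and> a \<le> S i ! j \<and> S i ! j \<le> b} = {l..<r}"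
    using sorted_range_indices_atLeastLessThan assms(1,2) by blast
  have "real (charlen (filter (\<lambda>s. a \<le> s \<and> s \<le> b) (S i))) = real (\<Sum>t\<in>{l..<r}. length (S i ! t))"
    using range by (simp add: charlen_filter)
  also have "\<dots> \<le> real k * real ?L + (real k + 1) * ?c"
  proof (rule sum_le_by_marked_count[where M = "sample_idx (S i) ?w"])
    show "card (sample_idx (S i) ?w \<inter> {l..<r}) = k"
      using assms(3) range by (simp add: Int_commute)
  qed (use lr sample_free_run_charlen_le in \<open>auto intro!: length_le_max_len[OF assms(1)]\<close>)
  also have "\<dots> \<le> real k * real ?L + (real k + 1) * ?w"
    by (intro add_left_mono mult_left_mono sample_spacing_le_omega assms(1)) simp
  also have "\<dots> \<le> (real k + 1) * (?w + real ?L)"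
    by (simp add: algebra_simps)
  finally show ?thesis .
qed

end
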